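(* Let $\mathcal{X}=\mathbb{R}$, let $t_1,\dots,t_n$ be $n$ distinct real numbers, and let $\mathcal{H}=\{x\mapsto 2I(x\le t)-1: t\in\{t_1,\dots,t_n\}\}$. Then for every integer $k\ge0$, \[ \mathrm{ELdim}(\mathcal{H},k)=\max\Big\{t:\binom{t}{\le k+1}\le n\Big\}. \]
   Context: $\binom{t}{\le j}=\sum_{i=0}^{j}\binom{t}{i}$. Extended mistake tree w.r.t. $\mathcal{H}$: a finite full binary tree (possibly a single leaf) in which each internal node $v$ is labeled by $x_v\in\mathcal{X}$ and has two solid downward edges, to its left child (label $-1$) and right child (label $+1$), plus one dashed downward edge to one of its two children; each leaf is labeled by some $h\in\mathcal{H}$ with $h(x_v)$ equal to the direction label at every internal node $v$ on the root-to-leaf path. A root-to-leaf path chooses at each internal node one downward edge; its length is its number of edges. The tree is $(k,m)$-difficult if every root-to-leaf path using at most $k$ solid edges has length at least $m$. $\mathrm{ELdim}(\mathcal{H},k)$ is the supremum of $m$ such that a $(k,m)$-difficult extended mistake tree w.r.t. $\mathcal{H}$ exists. *)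

theory Defs
  imports Main "HOL-Library.Extended_Nat"
begin

definition binom_le :: "nat \<Rightarrow> nat \<Rightarrow> nat" where
  "binom_le t j = (\<Sum>i\<le>j. t choose i)"

text \<open>Internal node: instance label x, left child (label -1),
  right child (label +1), and a flag saying where the dashed edge goes
  (False = left child, True = right child).\<close>
datatype ('x, 'h) xtree =
    Leaf 'h
  | Node 'x "('x, 'h) xtree" "('x, 'h) xtree" bool

fun consistent_from :: "('x \<Rightarrow> int) set \<Rightarrow> ('x \<times> int) list \<Rightarrow> ('x, 'x \<Rightarrow> int) xtree \<Rightarrow> bool" where
  "consistent_from H cs (Leaf h) = (h \<in> H \<and> (\<forall>(x, y) \<in> set cs. h x = y))"
| "consistent_from H cs (Node x l r d) =
     (consistent_from H ((x, -1) # cs) l \<and> consistent_from H ((x, 1) # cs) r)"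

definition ext_mistake_tree :: "('x \<Rightarrow> int) set \<Rightarrow> ('x, 'x \<Rightarrow> int) xtree \<Rightarrow> bool" where
  "ext_mistake_tree H T = consistent_from H [] T"

text \<open>All root-to-leaf paths, recorded as (number of solid edges, length).\<close>
fun path_stats :: "('x, 'h) xtree \<Rightarrow> (nat \<times> nat) set" where
  "path_stats (Leaf h) = {(0, 0)}"
| "path_stats (Node x l r d) =
     {(Suc s, Suc len) | s len. (s, len) \<in> path_stats l \<union> path_stats r}
   \<union> {(s, Suc len) | s len. (s, len) \<in> path_stats (if d then r else l)}"

definition difficult :: "nat \<Rightarrow> nat \<Rightarrow> ('x, 'h) xtree \<Rightarrow> bool" where
  "difficult k m T = (\<forall>(s, len) \<in> path_stats T. s \<le> k \<longrightarrow> m \<le> len)"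

definition ELdim :: "('x \<Rightarrow> int) set \<Rightarrow> nat \<Rightarrow> enat" where
  "ELdim H k = Sup {enat m | m. \<exists>T. ext_mistake_tree H T \<and> difficult k m T}"

definition thresholds :: "real set \<Rightarrow> (real \<Rightarrow> int) set" where
  "thresholds T = {(\<lambda>x. if x \<le> t then 1 else -1) | t. t \<in> T}"

end

theory Submission
  imports Defs
begin

text \<open>Upper bound: in a \<open>(k, m)\<close>-difficult tree, the version space at a node splits between the
  two children; the child reached by the dashed edge must again carry a \<open>(k, m-1)\<close>-difficult
  subtree and the other one a \<open>(k-1, m-1)\<close>-difficult subtree, so Pascal's rule
  \<open>binom t (\<le> k+1) = binom (t-1) (\<le> k+1) + binom (t-1) (\<le> k)\<close> bounds the size of the version
  space from below by induction. Lower bound: for thresholds \<open>t\<^sub>1 < \<dots> < t\<^sub>n\<close>, querying the point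
  \<open>t\<^sub>a\<^sub>+\<^sub>1\<close> with \<open>a = binom (m-1) (\<le> k+1)\<close> splits them into the first \<open>a\<close> thresholds (label \<open>-1\<close>,
  dashed side) and the remaining \<open>n - a \<ge> binom (m-1) (\<le> k)\<close> ones (label \<open>+1\<close>), and the same
  recursion builds the tree.\<close>

lemma binom_le_0_left [simp]: "binom_le 0 j = 1"
  unfolding binom_le_def by (induction j) auto

lemma binom_le_0_right [simp]: "binom_le t 0 = 1"
  unfolding binom_le_def by simp

lemma binom_le_Suc_Suc: "binom_le (Suc t) (Suc j) = binom_le t (Suc j) + binom_le t j"
proof -
  have shift: "binom_le u (Suc j) = 1 + (\<Sum>i\<le>j. u choose Suc i)" for u
    unfolding binom_le_def by (subst sum.atMost_Suc_shift) simp
  show ?thesis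
    unfolding shift[of "Suc t"] shift[of t] by (simp add: sum.distrib binom_le_def)
qed

lemma Suc_le_binom_le: "Suc t \<le> binom_le t (Suc j)"
proof -
  have "(\<Sum>i\<le>1. t choose i) \<le> (\<Sum>i\<le>Suc j. t choose i)"
    by (rule sum_mono2) auto
  then show ?thesis unfolding binom_le_def by simp
qed

lemma one_le_binom_le: "1 \<le> binom_le t j"
  by (cases j) (auto intro: order_trans[OF _ Suc_le_binom_le])


lemma difficult_0 [simp]: "difficult k 0 T"
  unfolding difficult_def by auto

lemma difficult_Leaf: "difficult k m (Leaf h) \<longleftrightarrow> m = 0"
  unfolding difficult_def by auto

lemma difficult_antimono: "difficult k m T \<Longrightarrow> k' \<le> k \<Longrightarrow> difficult k' m T"
  unfolding difficult_def by auto

lemma difficult_Node_Suc: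
  "difficult k (Suc m) (Node x l r d) \<longleftrightarrow>
     difficult k m (if d then r else l) \<and>
     (0 < k \<longrightarrow> difficult (k - 1) m l \<and> difficult (k - 1) m r)"
proof -
  have "difficult k (Suc m) (Node x l r d) \<longleftrightarrow>
     difficult k m (if d then r else l) \<and>
     (\<forall>(s, len) \<in> path_stats l \<union> path_stats r. Suc s \<le> k \<longrightarrow> m \<le> len)"
    unfolding difficult_def by auto
  also have "(\<forall>(s, len) \<in> path_stats l \<union> path_stats r. Suc s \<le> k \<longrightarrow> m \<le> len) \<longleftrightarrow>
     (0 < k \<longrightarrow> difficult (k - 1) m l \<and> difficult (k - 1) m r)"
    unfolding difficult_def by (cases k) auto
  finally show ?thesis .
qed


definition version_space :: "('x \<Rightarrow> int) set \<Rightarrow> ('x \<times> int) list \<Rightarrow> ('x \<Rightarrow> int) set" where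
  "version_space H cs = {h \<in> H. \<forall>(x, y) \<in> set cs. h x = y}"

lemma version_space_Nil [simp]: "version_space H [] = H"
  by (simp add: version_space_def)

lemma version_space_Cons:
  "version_space H ((x, y) # cs) = {h \<in> version_space H cs. h x = y}"
  by (auto simp: version_space_def)

lemma consistent_from_Leaf_iff: "consistent_from H cs (Leaf h) \<longleftrightarrow> h \<in> version_space H cs"
  by (simp add: version_space_def)

lemma version_space_nonempty:
  "consistent_from H cs T \<Longrightarrow> version_space H cs \<noteq> {}"
proof (induction T arbitrary: cs)
  case (Leaf h)
  then show ?case by (auto simp: version_space_def)
next
  case (Node x l r d)
  then have "version_space H ((x, -1) # cs) \<noteq> {}" by simp
  then show ?case by (auto simp: version_space_Cons)
qed

lemma one_le_card_version_space:
  "finite H \<Longrightarrow> consistent_from H cs T \<Longrightarrow> 1 \<le> card (version_space H cs)"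
  using version_space_nonempty[of H cs T]
  by (simp add: Suc_le_eq card_gt_0_iff version_space_def)

lemma card_version_space_ge_binom_le:
  assumes "finite H" "consistent_from H cs T" "difficult k m T"
  shows "binom_le m (Suc k) \<le> card (version_space H cs)"
  using assms(2,3)
proof (induction T arbitrary: cs k m)
  case (Leaf h)
  then show ?case
    using one_le_card_version_space[OF assms(1) Leaf.prems(1)] by (simp add: difficult_Leaf)
next
  case (Node x l r d)
  show ?case
  proof (cases m)
    case 0
    then show ?thesis using one_le_card_version_space[OF assms(1) Node.prems(1)] by simp
  next
    case (Suc m')
    define V\<^sub>l where "V\<^sub>l = version_space H ((x, -1) # cs)"
    define V\<^sub>r where "V\<^sub>r = version_space H ((x, 1) # cs)"
    have cons: "consistent_from H ((x, -1) # cs) l" "consistent_from H ((x, 1) # cs) r"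
      using Node.prems(1) by auto
    have diff: "difficult k m' (if d then r else l)"
      "0 < k \<Longrightarrow> difficult (k - 1) m' l \<and> difficult (k - 1) m' r"
      using Node.prems(2) by (simp_all add: Suc difficult_Node_Suc)
    have solid: "binom_le m' k \<le> card V\<^sub>l \<and> binom_le m' k \<le> card V\<^sub>r"
    proof (cases k)
      case 0
      then show ?thesis
        using one_le_card_version_space[OF assms(1)] cons by (simp add: V\<^sub>l_def V\<^sub>r_def)
    next
      case (Suc k')
      then show ?thesis using diff(2) Node.IH cons by (simp add: V\<^sub>l_def V\<^sub>r_def)
    qed
    have dashed: "binom_le m' (Suc k) \<le> (if d then card V\<^sub>r else card V\<^sub>l)"
      using diff(1) Node.IH cons by (cases d) (simp_all add: V\<^sub>l_def V\<^sub>r_def)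
    have fin: "finite (version_space H cs)"
      using assms(1) by (simp add: version_space_def)
    have "card V\<^sub>l + card V\<^sub>r = card (V\<^sub>l \<union> V\<^sub>r)"
      by (rule card_Un_disjoint[symmetric])
        (use fin in \<open>auto simp: V\<^sub>l_def V\<^sub>r_def version_space_Cons\<close>)
    also have "\<dots> \<le> card (version_space H cs)"
      by (rule card_mono[OF fin]) (auto simp: V\<^sub>l_def V\<^sub>r_def version_space_Cons)
    finally show ?thesis
      using solid dashed by (cases d) (simp_all add: Suc binom_le_Suc_Suc)
  qed
qed


definition threshold :: "'a::linorder \<Rightarrow> 'a \<Rightarrow> int" where
  "threshold t = (\<lambda>x. if x \<le> t then 1 else -1)"

lemma thresholds_eq_image: "thresholds Ts = threshold ` Ts"
  by (auto simp: thresholds_def threshold_def)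

lemma threshold_split:
  assumes "sorted_wrt (<) (ys @ zs)" "zs \<noteq> []"
  shows "\<forall>t \<in> set ys. threshold t (hd zs) = -1" "\<forall>t \<in> set zs. threshold t (hd zs) = 1"
proof -
  obtain z zs' where zs: "zs = z # zs'" using assms(2) by (cases zs) auto
  show "\<forall>t \<in> set ys. threshold t (hd zs) = -1"
    using assms(1) by (auto simp: zs sorted_wrt_append threshold_def)
  show "\<forall>t \<in> set zs. threshold t (hd zs) = 1"
    using assms(1) by (auto simp: zs sorted_wrt_append threshold_def)
qed

lemma exists_difficult_tree_thresholds:
  assumes "sorted_wrt (<) xs" "threshold ` set xs \<subseteq> version_space H cs"
    and "binom_le m (Suc k) \<le> length xs"
  shows "\<exists>T. consistent_from H cs T \<and> difficult k m T"
  using assms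
proof (induction m arbitrary: k xs cs)
  case 0
  then have "xs \<noteq> []" using one_le_binom_le[of 0 "Suc k"] by auto
  then have "threshold (hd xs) \<in> version_space H cs" using "0.prems"(2) by auto
  then show ?case by (metis consistent_from_Leaf_iff difficult_0)
next
  case (Suc m)
  define a where "a = binom_le m (Suc k)"
  define ys where "ys = take a xs"
  define zs where "zs = drop a xs"
  have len: "a + binom_le m k \<le> length xs"
    using Suc.prems(3) by (simp add: a_def binom_le_Suc_Suc)
  then have "a < length xs" using one_le_binom_le[of m k] by linarith
  then have len_ys: "length ys = a" and zs: "zs \<noteq> []" by (simp_all add: ys_def zs_def)
  have sorted: "sorted_wrt (<) (ys @ zs)" using Suc.prems(1) by (simp add: ys_def zs_def)
  define x where "x = hd zs"
  have "threshold ` set ys \<subseteq> version_space H ((x, -1) # cs)"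
    "threshold ` set zs \<subseteq> version_space H ((x, 1) # cs)"
    using Suc.prems(2) threshold_split[OF sorted zs] set_take_subset[of a xs]
      set_drop_subset[of a xs]
    by (fastforce simp: version_space_Cons x_def ys_def zs_def)+
  note parts = this sorted_wrt_append[THEN iffD1, OF sorted]
  obtain L where L: "consistent_from H ((x, -1) # cs) L" "difficult k m L"
    using Suc.IH[where k = k and xs = ys and cs = "(x, -1) # cs"] parts len_ys a_def by auto
  obtain R where R: "consistent_from H ((x, 1) # cs) R" "0 < k \<longrightarrow> difficult (k - 1) m R"
  proof (cases k)
    case 0
    then have "threshold (hd zs) \<in> version_space H ((x, 1) # cs)" using parts(2) zs by auto
    then show ?thesis using that 0 by (metis consistent_from_Leaf_iff less_irrefl)
  next
    case (Suc k')
    have "binom_le m (Suc k') \<le> length zs"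
      using len Suc \<open>a < length xs\<close> by (simp add: zs_def)
    then show ?thesis
      using that Suc.IH[where k = k' and xs = zs and cs = "(x, 1) # cs"] parts Suc by auto
  qed
  have "difficult k (Suc m) (Node x L R False)"
    using L(2) R(2) difficult_antimono[OF L(2)] by (simp add: difficult_Node_Suc)
  moreover have "consistent_from H cs (Node x L R False)" using L(1) R(1) by simp
  ultimately show ?case by blast
qed


lemma ELdim_eqI:
  assumes "ext_mistake_tree H T" "difficult k m T"
    and "\<And>m' T'. ext_mistake_tree H T' \<Longrightarrow> difficult k m' T' \<Longrightarrow> m' \<le> m"
  shows "ELdim H k = enat m"
  unfolding ELdim_def using assms by (intro cSup_eq_maximum) auto

theorem mainTheorem9:
  fixes Ts :: "real set" and n k :: nat
  assumes "finite Ts" and "card Ts = n" and "n \<ge> 1"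
  shows "ELdim (thresholds Ts) k = enat (Max {t. binom_le t (k + 1) \<le> n})"
proof -
  define S where "S = {t. binom_le t (Suc k) \<le> n}"
  have "S \<subseteq> {..n}" by (fastforce simp: S_def dest: order_trans[OF Suc_le_binom_le])
  then have fin: "finite S" by (rule finite_subset) simp
  moreover have "0 \<in> S" using assms(3) by (simp add: S_def)
  ultimately have max: "Max S \<in> S" by (intro Max_in) auto
  define xs where "xs = sorted_list_of_set Ts"
  have "sorted_wrt (<) xs" "threshold ` set xs = thresholds Ts" "length xs = n"
    using assms(1,2) by (simp_all add: xs_def thresholds_eq_image)
  then obtain T where "ext_mistake_tree (thresholds Ts) T" "difficult k (Max S) T"
    using exists_difficult_tree_thresholds[of xs "thresholds Ts" "[]" "Max S" k] max
    by (auto simp: S_def ext_mistake_tree_def)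
  moreover have "m \<le> Max S" if "ext_mistake_tree (thresholds Ts) T'" "difficult k m T'" for m T'
  proof -
    have "card (thresholds Ts) \<le> n"
      using card_image_le[OF assms(1), of threshold] assms(2) by (simp add: thresholds_eq_image)
    then have "m \<in> S"
      using card_version_space_ge_binom_le[of "thresholds Ts" "[]" T' k m] that assms(1)
      by (simp add: S_def ext_mistake_tree_def thresholds_eq_image)
    then show ?thesis using fin by simp
  qed
  ultimately show ?thesis unfolding S_def by (simp add: ELdim_eqI)
qed

end
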